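(* Let $f\colon 2^{\mathcal{N}}\to\mathbb{R}$ be non-negative and submodular, $|\mathcal{N}|=n$, $k$ a positive integer, $\varepsilon>0$, and let $S\subseteq\mathcal{N}$ with $|S|=k$. Assume $\mathcal{N}\setminus S$ contains a dummy element $d$ (i.e., $f(A\cup\{d\})=f(A)$ for all $A\subseteq\mathcal{N}$). Suppose there exist an integer $1\le t\le k$ and sets $T_+\subseteq\mathcal{N}\setminus S$, $T_-\subseteq S$ with $|T_+|=|T_-|=t$ and \[ \sum_{u\in T_+} f(u\mid S)\ >\ \sum_{v\in T_-} f(v\mid S-v)+\varepsilon f(S). \] Let $Z$ be a uniformly random subset of $\mathcal{N}$ of size $\lceil n/k\rceil$. Let $u$ be an element of $Z\setminus S$ maximizing $f(u\mid S)$, except that $u:=d$ if $Z\setminus S=\emptyset$ or $\max_{u'\in Z\setminus S}f(u'\mid S)\le 0$. Let $v\in\arg\min_{v'\in S} f(v'\mid S-v')$. Define $S'=S-v+u$ if $f(S-v+u)>f(S)$, and $S'=S$ otherwise. Then \[ \mathbb{E}\big[f(S')-f(S)\big]\ \ge\ \frac{(1-1/e)\,\varepsilon}{k}\, f(S). \]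
   Context: Notation: $f(u\mid A)=f(A\cup\{u\})-f(A)$; $S-v=S\setminus\{v\}$, $S+u=S\cup\{u\}$. Submodularity: $f(A\cup\{s\})-f(A)\ge f(B\cup\{s\})-f(B)$ for all $A\subseteq B\subseteq\mathcal{N}$, $s\notin B$. *)

theory Defs
  imports "HOL-Probability.Probability"
begin

definition marg :: "('a set \<Rightarrow> real) \<Rightarrow> 'a \<Rightarrow> 'a set \<Rightarrow> real" where
  "marg f u A = f (insert u A) - f A"

definition submodular_on :: "'a set \<Rightarrow> ('a set \<Rightarrow> real) \<Rightarrow> bool" where
  "submodular_on N f \<longleftrightarrow>
     (\<forall>A B s. A \<subseteq> B \<and> B \<subseteq> N \<and> s \<in> N \<and> s \<notin> B \<longrightarrow>
        f (A \<union> {s}) - f A \<ge> f (B \<union> {s}) - f B)"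

definition swap_step :: "('a set \<Rightarrow> real) \<Rightarrow> 'a set \<Rightarrow> 'a \<Rightarrow> 'a \<Rightarrow> 'a set" where
  "swap_step f S v u =
     (if f (insert u (S - {v})) > f S then insert u (S - {v}) else S)"

end

theory Submission
  imports Defs
begin

text \<open>Let \<open>m = f(v | S - v)\<close> be the smallest loss of removing an element of \<open>S\<close> and
  \<open>g(u) = max 0 (f(u | S) - m)\<close>. The gap hypothesis gives \<open>\<Sum>\<^sub>u\<^sub>\<in>\<^sub>T\<^sub>+ g(u) \<ge> \<epsilon> f(S)\<close>, and
  by submodularity the swap step gains at least \<open>g(u)\<close> for every \<open>u \<in> Z \<inter> T\<^sub>+\<close>.
  A random \<open>s\<close>-subset with \<open>s \<ge> n/k\<close> misses a fixed \<open>i\<close>-set with probability at most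
  \<open>(1 - 1/k)\<^sup>i\<close>, so it meets it with probability at least \<open>(1 - 1/e) i/k\<close> by concavity of
  \<open>i \<mapsto> 1 - (1 - 1/k)\<^sup>i\<close>. Peeling off the smallest weight of \<open>T\<^sub>+\<close> layer by layer turns
  these hitting probabilities into \<open>E[max\<^sub>Z\<^sub>\<inter>\<^sub>T\<^sub>+ g] \<ge> (1 - 1/e)/k \<Sum>\<^sub>T\<^sub>+ g\<close>.\<close>

lemma binomial_diff_le_power:
  fixes n s i :: nat
  assumes "i \<le> n" "s \<le> n"
  shows "real ((n - i) choose s) \<le> (1 - real s / real n) ^ i * real (n choose s)"
  using assms(1)
proof (induction i)
  case 0
  then show ?case by simp
next
  case (Suc i)
  define m where "m = n - i"
  have m: "1 \<le> m" "m \<le> n" "n - Suc i = m - 1"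
    using Suc.prems unfolding m_def by auto
  have factor: "real (m - s) \<le> real m * (1 - real s / real n)"
  proof (cases "s \<le> m")
    case True
    have "real s * real m / real n \<le> real s"
      using m by (simp add: divide_le_eq mult_left_mono)
    then show ?thesis using True by (simp add: of_nat_diff algebra_simps)
  next
    case False
    then show ?thesis using assms(2) by (simp add: divide_le_eq)
  qed
  have "real m * real ((m - 1) choose s) = real (m - s) * real (m choose s)"
    by (metis binomial_absorb_comp of_nat_mult)
  then have "real ((m - 1) choose s) = real (m - s) / real m * real (m choose s)"
    using m by (simp add: field_simps)
  also have "\<dots> \<le> (1 - real s / real n) * real (m choose s)"
    using m factor by (intro mult_right_mono) (simp_all add: divide_le_eq mult.commute)
  also have "\<dots> \<le> (1 - real s / real n) * ((1 - real s / real n) ^ i * real (n choose s))"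
    using Suc m assms(2) unfolding m_def
    by (intro mult_left_mono) (simp_all add: divide_le_eq)
  finally show ?case using m by simp
qed

lemma card_subsets_disjoint:
  assumes "finite N" "A \<subseteq> N"
  shows "card {Z. Z \<subseteq> N \<and> card Z = s \<and> Z \<inter> A = {}} = (card N - card A) choose s"
proof -
  have "{Z. Z \<subseteq> N \<and> card Z = s \<and> Z \<inter> A = {}} = {Z. Z \<subseteq> N - A \<and> card Z = s}"
    by auto
  then show ?thesis
    using assms n_subsets[of "N - A" s] by (simp add: card_Diff_subset finite_subset)
qed

lemma one_minus_power_concave:
  fixes a :: real and i m :: nat
  assumes "0 \<le> a" "a \<le> 1" "i \<le> m"
  shows "real i * (1 - a ^ m) \<le> real m * (1 - a ^ i)"
  using assms(3)
proof (induction m rule: dec_induct)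
  case base
  show ?case by simp
next
  case (step m)
  have "real i * a ^ m = (\<Sum>j<i. a ^ m)" by simp
  also have "\<dots> \<le> (\<Sum>j<i. a ^ j)"
    using step.hyps assms by (intro sum_mono power_decreasing) auto
  finally have "real i * a ^ m * (1 - a) \<le> (\<Sum>j<i. a ^ j) * (1 - a)"
    using assms by (intro mult_right_mono) auto
  also have "\<dots> = 1 - a ^ i"
    by (simp add: one_diff_power_eq mult.commute)
  finally have "real i * a ^ m * (1 - a) \<le> 1 - a ^ i" .
  then show ?case using step.IH by (simp add: algebra_simps)
qed

lemma one_minus_inverse_power_le_exp:
  assumes "1 \<le> k"
  shows "(1 - 1 / real k) ^ k \<le> 1 / exp 1"
proof -
  have "(1 - 1 / real k) ^ k \<le> exp (- (1 / real k)) ^ k"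
    using assms exp_ge_add_one_self[of "- (1 / real k)"] by (intro power_mono) auto
  also have "\<dots> = exp (-1)"
    using assms by (simp flip: exp_of_nat_mult)
  finally show ?thesis by (simp add: exp_minus inverse_eq_divide)
qed

lemma one_minus_inverse_power_ge:
  assumes "1 \<le> k" "i \<le> k"
  shows "(1 - 1 / exp 1) / real k * real i \<le> 1 - (1 - 1 / real k) ^ i"
proof -
  have "real i * (1 - 1 / exp 1) \<le> real i * (1 - (1 - 1 / real k) ^ k)"
    using one_minus_inverse_power_le_exp[OF assms(1)] by (intro mult_left_mono) auto
  also have "\<dots> \<le> real k * (1 - (1 - 1 / real k) ^ i)"
    using assms by (intro one_minus_power_concave) auto
  finally show ?thesis using assms by (simp add: field_simps)
qed

lemma card_subsets_meeting_ge:
  fixes N A :: "'a set" and k s :: nat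
  assumes "finite N" "A \<subseteq> N" "card A \<le> k" "1 \<le> k" "card N \<le> k * s" "s \<le> card N"
  shows "(1 - 1 / exp 1) / real k * real (card A) * real (card {Z. Z \<subseteq> N \<and> card Z = s})
           \<le> real (card {Z. Z \<subseteq> N \<and> card Z = s \<and> Z \<inter> A \<noteq> {}})"
proof (cases "A = {}")
  case True
  then show ?thesis by simp
next
  case False
  define n i where "n = card N" and "i = card A"
  have "0 < n" "i \<le> n"
    using False assms(1,2) unfolding n_def i_def by (auto simp: card_gt_0_iff card_mono finite_subset)
  have ratio: "1 - real s / real n \<le> 1 - 1 / real k"
    using \<open>0 < n\<close> assms(4,5) unfolding n_def by (simp add: field_simps flip: of_nat_mult)
  let ?F = "{Z. Z \<subseteq> N \<and> card Z = s}"
  let ?hit = "{Z. Z \<subseteq> N \<and> card Z = s \<and> Z \<inter> A \<noteq> {}}"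
  let ?miss = "{Z. Z \<subseteq> N \<and> card Z = s \<and> Z \<inter> A = {}}"
  have "finite ?F"
    using assms(1) by simp
  then have "card ?F = card ?hit + card ?miss"
    by (subst card_Un_disjoint[symmetric]) (auto intro: arg_cong[where f = card] rev_finite_subset)
  then have split: "real (n choose s) = real (card ?hit) + real ((n - i) choose s)"
    using n_subsets[OF assms(1), of s] card_subsets_disjoint[OF assms(1,2)]
    unfolding n_def i_def by simp
  have "0 \<le> 1 - real s / real n"
    using \<open>0 < n\<close> assms(6) unfolding n_def by simp
  then have "real ((n - i) choose s) \<le> (1 - 1 / real k) ^ i * real (n choose s)"
    using binomial_diff_le_power[OF \<open>i \<le> n\<close> assms(6)[folded n_def]] ratio
    by (meson mult_right_mono of_nat_0_le_iff order_trans power_mono)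
  then have "(1 - (1 - 1 / real k) ^ i) * real (n choose s) \<le> real (card ?hit)"
    using split by (simp add: algebra_simps)
  moreover have "(1 - 1 / exp 1) / real k * real i * real (n choose s)
      \<le> (1 - (1 - 1 / real k) ^ i) * real (n choose s)"
    using assms(3,4) unfolding i_def by (intro mult_right_mono one_minus_inverse_power_ge) auto
  ultimately show ?thesis
    using n_subsets[OF assms(1), of s] unfolding n_def i_def by simp
qed

lemma nat_ceiling_divide_bounds:
  fixes n k :: nat
  assumes "1 \<le> k"
  shows "nat \<lceil>real n / real k\<rceil> \<le> n" and "n \<le> k * nat \<lceil>real n / real k\<rceil>"
proof -
  show "nat \<lceil>real n / real k\<rceil> \<le> n"
    using assms mult_left_mono[of 1 "real k" "real n"]
    by (simp add: nat_le_iff ceiling_le_iff divide_le_eq)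
  define s where "s = nat \<lceil>real n / real k\<rceil>"
  have "real n / real k \<le> real s"
    unfolding s_def by linarith
  then have "n \<le> k * s"
    using assms by (simp add: divide_le_eq mult.commute flip: of_nat_mult)
  then show "n \<le> k * nat \<lceil>real n / real k\<rceil>"
    unfolding s_def .
qed

definition max_nonneg :: "('a \<Rightarrow> real) \<Rightarrow> 'a set \<Rightarrow> real" where
  "max_nonneg g A = Max (insert 0 (g ` A))"

lemma max_nonneg_le_iff:
  "finite A \<Longrightarrow> max_nonneg g A \<le> b \<longleftrightarrow> 0 \<le> b \<and> (\<forall>x\<in>A. g x \<le> b)"
  unfolding max_nonneg_def by simp

lemma max_nonneg_empty [simp]: "max_nonneg g {} = 0"
  unfolding max_nonneg_def by simp

lemma max_nonneg_ge: "finite A \<Longrightarrow> x \<in> A \<Longrightarrow> g x \<le> max_nonneg g A"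
  unfolding max_nonneg_def by simp

lemma max_nonneg_shift:
  assumes "finite A" "0 \<le> c" "\<forall>x\<in>A. c \<le> g x"
  shows "(if A = {} then 0 else c) + max_nonneg (\<lambda>x. g x - c) (A - {u}) \<le> max_nonneg g A"
proof (cases "A = {}")
  case True
  then show ?thesis by simp
next
  case False
  then obtain x where "x \<in> A" by auto
  then have "c \<le> max_nonneg g A"
    using assms max_nonneg_ge[OF assms(1), of x g] by fastforce
  moreover have "max_nonneg (\<lambda>x. g x - c) (A - {u}) \<le> max_nonneg g A - c"
    using assms(1) calculation by (auto simp: max_nonneg_le_iff max_nonneg_ge)
  ultimately show ?thesis using False by simp
qed

lemma sum_remove_shift:
  fixes g :: "'a \<Rightarrow> real"
  assumes "finite T" "u \<in> T"
  shows "sum g T = g u * real (card T) + (\<Sum>x\<in>T - {u}. g x - g u)"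
proof -
  have "real (card T) = real (card (T - {u})) + 1"
    using card_Suc_Diff1[OF assms] by (metis add.commute of_nat_Suc)
  moreover have "sum g T = g u + sum g (T - {u})"
    using assms by (rule sum.remove)
  ultimately show ?thesis
    by (simp add: sum_subtractf algebra_simps)
qed

lemma sum_max_nonneg_ge:
  fixes F :: "'a set set" and T :: "'a set" and g :: "'a \<Rightarrow> real"
  assumes "finite F" "finite T"
    and "\<And>A. A \<subseteq> T \<Longrightarrow> \<alpha> * real (card A) * real (card F) \<le> real (card {Z\<in>F. Z \<inter> A \<noteq> {}})"
    and "\<And>x. x \<in> T \<Longrightarrow> 0 \<le> g x"
  shows "\<alpha> * real (card F) * sum g T \<le> (\<Sum>Z\<in>F. max_nonneg g (Z \<inter> T))"
  using assms(2-4)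
proof (induction T arbitrary: g rule: finite_psubset_induct)
  case (psubset T)
  show ?case
  proof (cases "T = {}")
    case True
    then show ?thesis by simp
  next
    case False
    define u where "u = arg_min_on g T"
    define c where "c = g u"
    have u: "u \<in> T"
      unfolding u_def using psubset.hyps False by (rule arg_min_if_finite)
    have c: "0 \<le> c" "\<forall>x\<in>T. c \<le> g x"
      using u psubset.hyps psubset.prems(2) False unfolding c_def u_def
      by (auto intro: arg_min_least)
    let ?T' = "T - {u}" and ?g' = "\<lambda>x. g x - c"
    have IH: "\<alpha> * real (card F) * sum ?g' ?T' \<le> (\<Sum>Z\<in>F. max_nonneg ?g' (Z \<inter> ?T'))"
      using u c psubset.prems by (intro psubset.IH) auto
    have "sum g T = c * real (card T) + sum ?g' ?T'"
      unfolding c_def using psubset.hyps u by (rule sum_remove_shift)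
    then have "\<alpha> * real (card F) * sum g T
        = c * (\<alpha> * real (card T) * real (card F)) + \<alpha> * real (card F) * sum ?g' ?T'"
      by (simp add: algebra_simps)
    also have "\<dots> \<le> c * real (card {Z\<in>F. Z \<inter> T \<noteq> {}}) + (\<Sum>Z\<in>F. max_nonneg ?g' (Z \<inter> ?T'))"
      using c IH psubset.prems(1) by (intro add_mono mult_left_mono) auto
    also have "c * real (card {Z\<in>F. Z \<inter> T \<noteq> {}}) = (\<Sum>Z\<in>F. if Z \<inter> T = {} then 0 else c)"
      using assms(1) by (simp add: sum.If_cases Int_def conj_commute)
    also have "(\<Sum>Z\<in>F. if Z \<inter> T = {} then 0 else c) + (\<Sum>Z\<in>F. max_nonneg ?g' (Z \<inter> ?T'))
        \<le> (\<Sum>Z\<in>F. max_nonneg g (Z \<inter> T))"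
      unfolding sum.distrib[symmetric] Int_Diff[symmetric]
      using psubset.hyps c by (intro sum_mono max_nonneg_shift) auto
    finally show ?thesis .
  qed
qed

lemma expectation_pmf_of_set_mono:
  fixes g h :: "'a \<Rightarrow> real"
  assumes "finite F" "F \<noteq> {}" "\<And>Z. Z \<in> F \<Longrightarrow> g Z \<le> h Z"
  shows "measure_pmf.expectation (pmf_of_set F) g \<le> measure_pmf.expectation (pmf_of_set F) h"
  unfolding integral_pmf_of_set[OF assms(2,1)] using assms(3) by (intro divide_right_mono sum_mono) auto

lemma expectation_max_nonneg_ge:
  fixes N T :: "'a set" and g :: "'a \<Rightarrow> real" and k s :: nat
  assumes "finite N" "T \<subseteq> N" "card T \<le> k" "1 \<le> k" "card N \<le> k * s" "s \<le> card N"
    and "\<And>x. x \<in> T \<Longrightarrow> 0 \<le> g x"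
  shows "(1 - 1 / exp 1) / real k * sum g T
           \<le> measure_pmf.expectation (pmf_of_set {Z. Z \<subseteq> N \<and> card Z = s})
                 (\<lambda>Z. max_nonneg g (Z \<inter> T))"
proof -
  define F where "F = {Z. Z \<subseteq> N \<and> card Z = s}"
  have "0 < card F"
    using n_subsets[OF assms(1)] assms(6) unfolding F_def by (simp add: zero_less_binomial_iff)
  then have F: "finite F" "F \<noteq> {}"
    by (simp_all add: card_gt_0_iff)
  have "(1 - 1 / exp 1) / real k * real (card A) * real (card F) \<le> real (card {Z\<in>F. Z \<inter> A \<noteq> {}})"
    if "A \<subseteq> T" for A
    using card_subsets_meeting_ge[OF assms(1) _ _ assms(4-6), of A] that assms(2,3)
      card_mono[OF finite_subset[OF assms(2,1)] that]
    unfolding F_def by (simp add: conj_assoc)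
  then have "(1 - 1 / exp 1) / real k * real (card F) * sum g T \<le> (\<Sum>Z\<in>F. max_nonneg g (Z \<inter> T))"
    using F assms(1,2,7) by (intro sum_max_nonneg_ge) (auto intro: finite_subset)
  then show ?thesis
    using F \<open>0 < card F\<close> unfolding F_def[symmetric]
    by (simp add: integral_pmf_of_set field_simps)
qed

lemma swap_step_ge:
  shows "f S \<le> f (swap_step f S v u)" and "f (insert u (S - {v})) \<le> f (swap_step f S v u)"
  unfolding swap_step_def by auto

lemma marg_remove_eq: "v \<in> S \<Longrightarrow> f S = f (S - {v}) + marg f v (S - {v})"
  unfolding marg_def by (simp add: insert_absorb)

lemma marg_swap_le:
  assumes "submodular_on N f" "S \<subseteq> N" "v \<in> S" "u \<in> N - S"
  shows "marg f u S - marg f v (S - {v}) \<le> f (insert u (S - {v})) - f S"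
proof -
  have "f (S \<union> {u}) - f S \<le> f ((S - {v}) \<union> {u}) - f (S - {v})"
    using assms(1)[unfolded submodular_on_def, rule_format, of "S - {v}" S u] assms(2-4) by auto
  then show ?thesis
    using marg_remove_eq[OF assms(3), of f] unfolding marg_def by simp
qed

lemma swap_step_gain_ge:
  assumes "submodular_on N f" "S \<subseteq> N" "v \<in> S"
    and "\<forall>A. A \<subseteq> N \<longrightarrow> f (A \<union> {d}) = f A"
    and "u = d \<and> marg f x S \<le> 0 \<or> u \<in> N - S \<and> marg f x S \<le> marg f u S"
  shows "marg f x S - marg f v (S - {v}) \<le> f (swap_step f S v u) - f S"
  using assms(5)
proof
  assume "u = d \<and> marg f x S \<le> 0"
  moreover have "f (insert d (S - {v})) = f (S - {v})"
    using assms(2,4) by (simp add: subset_iff)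
  ultimately show ?thesis
    using swap_step_ge(2)[of f u S v] marg_remove_eq[OF assms(3), of f] by simp
next
  assume "u \<in> N - S \<and> marg f x S \<le> marg f u S"
  then show ?thesis
    using marg_swap_le[OF assms(1-3)] swap_step_ge(2)[of f u S v] by fastforce
qed

lemma sum_excess_gain_ge:
  assumes "Tm \<subseteq> S" "card Tp = card Tm"
    and "\<forall>w\<in>S. marg f v (S - {v}) \<le> marg f w (S - {w})"
    and "(\<Sum>u\<in>Tp. marg f u S) > (\<Sum>w\<in>Tm. marg f w (S - {w})) + c"
  shows "c \<le> (\<Sum>u\<in>Tp. max 0 (marg f u S - marg f v (S - {v})))"
proof -
  let ?m = "marg f v (S - {v})"
  have "real (card Tm) * ?m \<le> (\<Sum>w\<in>Tm. marg f w (S - {w}))"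
    using assms(1,3) sum_bounded_below[of Tm ?m "\<lambda>w. marg f w (S - {w})"] by auto
  then have "c \<le> (\<Sum>u\<in>Tp. marg f u S - ?m)"
    using assms(2,4) by (simp add: sum_subtractf)
  also have "\<dots> \<le> (\<Sum>u\<in>Tp. max 0 (marg f u S - ?m))"
    by (intro sum_mono) simp
  finally show ?thesis .
qed

lemma max_nonneg_excess_le_swap_gain:
  fixes f :: "'a set \<Rightarrow> real"
  assumes "submodular_on N f" "S \<subseteq> N" "v \<in> S"
    and "\<forall>A. A \<subseteq> N \<longrightarrow> f (A \<union> {d}) = f A"
    and "finite Z" "Z \<subseteq> N" "T \<inter> S = {}"
    and "((Z - S = {} \<or> Max ((\<lambda>x. marg f x S) ` (Z - S)) \<le> 0) \<longrightarrow> u = d) \<and>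
      (\<not> (Z - S = {} \<or> Max ((\<lambda>x. marg f x S) ` (Z - S)) \<le> 0) \<longrightarrow>
         u \<in> Z - S \<and> (\<forall>y\<in>Z - S. marg f y S \<le> marg f u S))"
  shows "max_nonneg (\<lambda>x. max 0 (marg f x S - marg f v (S - {v}))) (Z \<inter> T)
           \<le> f (swap_step f S v u) - f S"
proof -
  have "marg f x S - marg f v (S - {v}) \<le> f (swap_step f S v u) - f S" if "x \<in> Z - S" for x
  proof (rule swap_step_gain_ge[OF assms(1-4)])
    have "marg f x S \<le> Max ((\<lambda>x. marg f x S) ` (Z - S))"
      using assms(5) that by (intro Max_ge) auto
    then show "u = d \<and> marg f x S \<le> 0 \<or> u \<in> N - S \<and> marg f x S \<le> marg f u S"
      using assms(6,8) that by auto
  qed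
  then show ?thesis
    using assms(5,7) swap_step_ge(1)[of f S v u] by (auto simp: max_nonneg_le_iff)
qed

theorem mainTheorem4:
  fixes N :: "'a set" and f :: "'a set \<Rightarrow> real" and n k t :: nat and \<epsilon> :: real
    and S Tp Tm :: "'a set" and d v :: 'a and U :: "'a set \<Rightarrow> 'a"
  assumes finN: "finite N" and n_def: "card N = n"
    and nonneg: "\<forall>A. A \<subseteq> N \<longrightarrow> f A \<ge> 0"
    and submod: "submodular_on N f"
    and kpos: "k \<ge> 1" and eps: "\<epsilon> > 0"
    and SN: "S \<subseteq> N" and cardS: "card S = k"
    and dN: "d \<in> N - S" and dummy: "\<forall>A. A \<subseteq> N \<longrightarrow> f (A \<union> {d}) = f A"
    and t: "1 \<le> t" "t \<le> k"
    and Tp: "Tp \<subseteq> N - S" "card Tp = t"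
    and Tm: "Tm \<subseteq> S" "card Tm = t"
    and gap: "(\<Sum>u\<in>Tp. marg f u S) > (\<Sum>w\<in>Tm. marg f w (S - {w})) + \<epsilon> * f S"
    and U_choice: "\<forall>Z. Z \<subseteq> N \<and> card Z = nat \<lceil>real n / real k\<rceil> \<longrightarrow>
        ((Z - S = {} \<or> Max ((\<lambda>x. marg f x S) ` (Z - S)) \<le> 0) \<longrightarrow> U Z = d) \<and>
        (\<not> (Z - S = {} \<or> Max ((\<lambda>x. marg f x S) ` (Z - S)) \<le> 0) \<longrightarrow>
           U Z \<in> Z - S \<and> (\<forall>x\<in>Z - S. marg f x S \<le> marg f (U Z) S))"
    and v_choice: "v \<in> S" "\<forall>w\<in>S. marg f v (S - {v}) \<le> marg f w (S - {w})"
  shows "measure_pmf.expectation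
           (pmf_of_set {Z. Z \<subseteq> N \<and> card Z = nat \<lceil>real n / real k\<rceil>})
           (\<lambda>Z. f (swap_step f S v (U Z)) - f S)
         \<ge> (1 - 1 / exp 1) * \<epsilon> / real k * f S"
proof -
  define s where "s = nat \<lceil>real n / real k\<rceil>"
  define g where "g = (\<lambda>u. max 0 (marg f u S - marg f v (S - {v})))"
  have s: "s \<le> card N" "card N \<le> k * s"
    unfolding s_def n_def using kpos by (rule nat_ceiling_divide_bounds)+
  have "(1 - 1 / exp 1) * \<epsilon> / real k * f S = (1 - 1 / exp 1) / real k * (\<epsilon> * f S)"
    by simp
  also have "\<dots> \<le> (1 - 1 / exp 1) / real k * sum g Tp"
    using sum_excess_gain_ge[OF Tm(1) _ v_choice(2) gap] Tp Tm unfolding g_def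
    by (intro mult_left_mono) auto
  also have "\<dots> \<le> measure_pmf.expectation (pmf_of_set {Z. Z \<subseteq> N \<and> card Z = s})
      (\<lambda>Z. max_nonneg g (Z \<inter> Tp))"
    using finN Tp t kpos s by (intro expectation_max_nonneg_ge) (auto simp: g_def)
  also have "\<dots> \<le> measure_pmf.expectation (pmf_of_set {Z. Z \<subseteq> N \<and> card Z = s})
      (\<lambda>Z. f (swap_step f S v (U Z)) - f S)"
  proof (rule expectation_pmf_of_set_mono)
    show "finite {Z. Z \<subseteq> N \<and> card Z = s}" "{Z. Z \<subseteq> N \<and> card Z = s} \<noteq> {}"
      using finN obtain_subset_with_card_n[OF s(1)] by auto
    fix Z assume "Z \<in> {Z. Z \<subseteq> N \<and> card Z = s}"
    then show "max_nonneg g (Z \<inter> Tp) \<le> f (swap_step f S v (U Z)) - f S"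
      unfolding g_def s_def using finN Tp U_choice
      by (intro max_nonneg_excess_le_swap_gain[OF submod SN v_choice(1) dummy])
        (auto intro: finite_subset)
  qed
  finally show ?thesis
    unfolding s_def .
qed

end
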